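(* Let $(A;R)\in\mathcal C$. Then a subset $Y\subseteq A$ is a basis of the pregeometry $PG(A;R)$ if and only if $A\setminus Y$ is the image of a transversal of $R$.
   Context: A set system is a pair $(A;R)$ where $A$ is a set and $R$ is a set of finite non-empty subsets of $A$. For finite $X\subseteq A$ write $R[X]=\{r\in R: r\subseteq X\}$ and define the predimension $\delta(X)=|X|-|R[X]|$. $\mathcal C$ is the class of finite set systems with $\delta(X)\ge 0$ for all $X\subseteq A$. For $X\subseteq A$ define $d(X)=\min\{\delta(Y): X\subseteq Y\subseteq A\}$ and $\mathrm{cl}(X)=\{y\in A: d(X\cup\{y\})=d(X)\}$; then $(A,\mathrm{cl})$ is a pregeometry (matroid) with rank function $d$, denoted $PG(A;R)$. A transversal of $(A;R)$ is an injective function $t:R\to A$ with $t(r)\in r$ for all $r\in R$. *)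

theory Defs
  imports Main
begin

definition set_system :: "'a set \<Rightarrow> 'a set set \<Rightarrow> bool" where
  "set_system A R \<longleftrightarrow> (\<forall>r\<in>R. r \<subseteq> A \<and> finite r \<and> r \<noteq> {})"

definition Rsub :: "'a set set \<Rightarrow> 'a set \<Rightarrow> 'a set set" where
  "Rsub R X = {r \<in> R. r \<subseteq> X}"

definition delta :: "'a set set \<Rightarrow> 'a set \<Rightarrow> int" where
  "delta R X = int (card X) - int (card (Rsub R X))"

definition in_C :: "'a set \<Rightarrow> 'a set set \<Rightarrow> bool" where
  "in_C A R \<longleftrightarrow> finite A \<and> set_system A R \<and> (\<forall>X. X \<subseteq> A \<longrightarrow> delta R X \<ge> 0)"

definition dim :: "'a set \<Rightarrow> 'a set set \<Rightarrow> 'a set \<Rightarrow> int" where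
  "dim A R X = Min {delta R Y | Y. X \<subseteq> Y \<and> Y \<subseteq> A}"

definition cl :: "'a set \<Rightarrow> 'a set set \<Rightarrow> 'a set \<Rightarrow> 'a set" where
  "cl A R X = {y \<in> A. dim A R (X \<union> {y}) = dim A R X}"

definition pg_indep :: "'a set \<Rightarrow> 'a set set \<Rightarrow> 'a set \<Rightarrow> bool" where
  "pg_indep A R Y \<longleftrightarrow> Y \<subseteq> A \<and> (\<forall>y\<in>Y. y \<notin> cl A R (Y - {y}))"

definition pg_basis :: "'a set \<Rightarrow> 'a set set \<Rightarrow> 'a set \<Rightarrow> bool" where
  "pg_basis A R Y \<longleftrightarrow> pg_indep A R Y \<and> cl A R Y = A"

definition transversal :: "'a set \<Rightarrow> 'a set set \<Rightarrow> ('a set \<Rightarrow> 'a) \<Rightarrow> bool" where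
  "transversal A R t \<longleftrightarrow> inj_on t R \<and> (\<forall>r\<in>R. t r \<in> r \<and> t r \<in> A)"

end

theory Submission
  imports Defs
begin

(* Write d for the dimension function dim A R.  Submodularity of the
   predimension \<delta>, inherited by d, shows that in the class C

     Y is independent  \<longleftrightarrow>  d(Y) = |Y|,      Y spans A  \<longleftrightarrow>  d(Y) = d(A) = |A| - |R|,

   so Y is a basis iff d(Y) \<ge> |Y| and |R| = |A - Y|.  The inequality
   d(Y) \<ge> |Y| unfolds to |R[Z]| \<le> |Z - Y| for all Y \<subseteq> Z \<subseteq> A, which is Hall's
   condition for the family (r - Y)_{r \<in> R}.  By Hall's marriage theorem this
   family then has a system of distinct representatives t, and |R| = |A - Y|
   makes its image all of A - Y. *)

definition hall_condition :: "'i set \<Rightarrow> ('i \<Rightarrow> 'b set) \<Rightarrow> bool" where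
  "hall_condition I S \<longleftrightarrow> (\<forall>J\<subseteq>I. card J \<le> card (\<Union>(S ` J)))"

lemma hall_conditionD: "hall_condition I S \<Longrightarrow> J \<subseteq> I \<Longrightarrow> card J \<le> card (\<Union>(S ` J))"
  by (simp add: hall_condition_def)

definition is_sdr :: "'i set \<Rightarrow> ('i \<Rightarrow> 'b set) \<Rightarrow> ('i \<Rightarrow> 'b) \<Rightarrow> bool" where
  "is_sdr I S f \<longleftrightarrow> inj_on f I \<and> (\<forall>i\<in>I. f i \<in> S i)"

lemma sdr_imp_hall_condition:
  assumes "finite I" "\<forall>i\<in>I. finite (S i)" "is_sdr I S f"
  shows "hall_condition I S"
  unfolding hall_condition_def
proof (intro allI impI)
  fix J assume J: "J \<subseteq> I"
  have "card J = card (f ` J)"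
    using assms(3) J by (metis card_image inj_on_subset is_sdr_def)
  also have "\<dots> \<le> card (\<Union>(S ` J))"
    using assms J by (intro card_mono) (auto simp: is_sdr_def intro: finite_subset)
  finally show "card J \<le> card (\<Union>(S ` J))" .
qed

(* Base case of Hall's theorem: if all sets have at most one element, Hall's
   condition forces them to be distinct singletons. *)
lemma hall_singletons:
  assumes "hall_condition I S" "\<forall>i\<in>I. finite (S i) \<and> card (S i) \<le> 1"
  shows "\<exists>f. is_sdr I S f"
proof -
  define f where "f i = the_elem (S i)" for i
  have single: "S i = {f i}" if "i \<in> I" for i
  proof -
    have "card {i} \<le> card (\<Union>(S ` {i}))"
      using hall_conditionD[OF assms(1), of "{i}"] that by simp
    moreover have "card (S i) \<le> 1" using assms(2) that by blast
    ultimately have "card (S i) = 1" by simp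
    then show ?thesis unfolding f_def by (metis card_1_singletonE the_elem_eq)
  qed
  have "inj_on f I"
  proof (rule inj_onI, rule ccontr)
    fix i j assume ij: "i \<in> I" "j \<in> I" "f i = f j" "i \<noteq> j"
    have "card {i, j} \<le> card (\<Union>(S ` {i, j}))"
      using hall_conditionD[OF assms(1), of "{i, j}"] ij by simp
    also have "\<Union>(S ` {i, j}) = {f i}" using single ij by auto
    finally show False using ij by simp
  qed
  then have "is_sdr I S f" using single unfolding is_sdr_def by blast
  then show ?thesis by blast
qed

lemma hall_violation_witness:
  assumes hall: "hall_condition I S" and fin: "finite I"
    and viol: "\<not> hall_condition I (S(i := S i - {x}))"
  obtains K where "K \<subseteq> I - {i}" "card (\<Union>(S ` K) \<union> (S i - {x})) < Suc (card K)"
proof -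
  let ?S' = "S(i := S i - {x})"
  obtain J where J: "J \<subseteq> I" "card (\<Union>(?S' ` J)) < card J"
    using viol unfolding hall_condition_def by (auto simp: not_le)
  have "i \<in> J"
  proof (rule ccontr)
    assume "i \<notin> J"
    then have "?S' ` J = S ` J" by (auto simp: image_def)
    then show False using hall_conditionD[OF hall J(1)] J(2) by simp
  qed
  then have "\<Union>(?S' ` J) = \<Union>(S ` (J - {i})) \<union> (S i - {x})" by auto
  moreover have "card J = Suc (card (J - {i}))"
    using \<open>i \<in> J\<close> card_Suc_Diff1 finite_subset[OF J(1) fin] by metis
  moreover have "J - {i} \<subseteq> I - {i}" using J(1) by blast
  ultimately show ?thesis using J(2) that by metis
qed

(* Key step (Rado): of two distinct points of S i, at least one can be deleted
   from S i without breaking Hall's condition.  Otherwise the two deficient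
   witnesses K1, K2 would violate Hall's condition on insert i (K1 \<union> K2)
   or on K1 \<inter> K2, by counting with card_Un_Int. *)
lemma hall_condition_shrink:
  assumes hall: "hall_condition I S" and fin: "finite I" "\<forall>i\<in>I. finite (S i)"
    and i: "i \<in> I" and x: "x1 \<in> S i" "x2 \<in> S i" "x1 \<noteq> x2"
  shows "hall_condition I (S(i := S i - {x1})) \<or> hall_condition I (S(i := S i - {x2}))"
proof (rule ccontr)
  assume "\<not> ?thesis"
  then have viol: "\<not> hall_condition I (S(i := S i - {x1}))" "\<not> hall_condition I (S(i := S i - {x2}))"
    by simp_all
  obtain K1 where K1: "K1 \<subseteq> I - {i}" and c1: "card (\<Union>(S ` K1) \<union> (S i - {x1})) < Suc (card K1)"
    using hall_violation_witness[OF hall fin(1) viol(1)] .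
  obtain K2 where K2: "K2 \<subseteq> I - {i}" and c2: "card (\<Union>(S ` K2) \<union> (S i - {x2})) < Suc (card K2)"
    using hall_violation_witness[OF hall fin(1) viol(2)] .
  define U1 where "U1 = \<Union>(S ` K1) \<union> (S i - {x1})"
  define U2 where "U2 = \<Union>(S ` K2) \<union> (S i - {x2})"
  have finK: "finite K1" "finite K2"
    using finite_subset[OF K1] finite_subset[OF K2] fin(1) by simp_all
  have finU: "finite U1" "finite U2"
    unfolding U1_def U2_def using finK K1 K2 fin(2) i by auto
  have "insert i (K1 \<union> K2) \<subseteq> I" using K1 K2 i by blast
  from hall_conditionD[OF hall this]
  have "card (insert i (K1 \<union> K2)) \<le> card (\<Union>(S ` insert i (K1 \<union> K2)))" .
  moreover have "\<Union>(S ` insert i (K1 \<union> K2)) = U1 \<union> U2"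
    unfolding U1_def U2_def using x by auto
  moreover have "card (insert i (K1 \<union> K2)) = Suc (card (K1 \<union> K2))"
    using finK K1 K2 by (simp add: subset_Diff_insert)
  ultimately have union: "Suc (card (K1 \<union> K2)) \<le> card (U1 \<union> U2)" by simp
  have "K1 \<inter> K2 \<subseteq> I" using K1 by blast
  from hall_conditionD[OF hall this]
  have "card (K1 \<inter> K2) \<le> card (\<Union>(S ` (K1 \<inter> K2)))" .
  also have "\<dots> \<le> card (U1 \<inter> U2)"
    using finU by (intro card_mono) (auto simp: U1_def U2_def)
  finally have inter: "card (K1 \<inter> K2) \<le> card (U1 \<inter> U2)" .
  show False
    using union inter c1 c2 card_Un_Int[OF finK] card_Un_Int[OF finU]
    unfolding U1_def[symmetric] U2_def[symmetric] by linarith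
qed

(* Hall's marriage theorem, by induction on the total size of the sets: shrink
   some set with two elements while keeping Hall's condition. *)
theorem hall_theorem:
  assumes "finite I" "\<forall>i\<in>I. finite (S i)" "hall_condition I S"
  shows "\<exists>f. is_sdr I S f"
  using assms(2,3)
proof (induction "\<Sum>i\<in>I. card (S i)" arbitrary: S rule: less_induct)
  case less
  show ?case
  proof (cases "\<exists>i\<in>I. 2 \<le> card (S i)")
    case False
    then show ?thesis using hall_singletons less.prems by fastforce
  next
    case True
    then obtain i where i: "i \<in> I" "2 \<le> card (S i)" by auto
    obtain T where T: "T \<subseteq> S i" "card T = 2"
      using obtain_subset_with_card_n[OF i(2)] by metis
    then obtain x1 x2 where x: "x1 \<in> S i" "x2 \<in> S i" "x1 \<noteq> x2"
      by (auto simp: card_2_iff)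
    have reduce: "\<exists>f. is_sdr I S f" if x: "x \<in> S i" and hall': "hall_condition I (S(i := S i - {x}))" for x
    proof -
      let ?S' = "S(i := S i - {x})"
      have "(\<Sum>j\<in>I. card (?S' j)) < (\<Sum>j\<in>I. card (S j))"
      proof (rule sum_strict_mono_ex1[OF assms(1)])
        show "\<forall>j\<in>I. card (?S' j) \<le> card (S j)"
          using less.prems(1) by (auto intro: card_mono)
        show "\<exists>j\<in>I. card (?S' j) < card (S j)"
          using i x less.prems(1) by (intro bexI[of _ i]) (auto intro: psubset_card_mono)
      qed
      moreover have "\<forall>j\<in>I. finite (?S' j)" using less.prems(1) by auto
      ultimately obtain f where "is_sdr I ?S' f" using less.hyps hall' by blast
      then have "is_sdr I S f" unfolding is_sdr_def by (metis Diff_iff fun_upd_apply)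
      then show ?thesis by blast
    qed
    show ?thesis
      using hall_condition_shrink[OF less.prems(2) assms(1) less.prems(1) i(1) x] reduce x by blast
  qed
qed

corollary hall_iff:
  assumes "finite I" "\<forall>i\<in>I. finite (S i)"
  shows "(\<exists>f. is_sdr I S f) \<longleftrightarrow> hall_condition I S"
  using hall_theorem[OF assms] sdr_imp_hall_condition[OF assms] by blast

lemma finite_delta_values: "finite A \<Longrightarrow> finite {delta R Y | Y. X \<subseteq> Y \<and> Y \<subseteq> A}"
  by (rule finite_subset[of _ "delta R ` Pow A"]) auto

lemma dim_le_delta: "finite A \<Longrightarrow> X \<subseteq> Y \<Longrightarrow> Y \<subseteq> A \<Longrightarrow> dim A R X \<le> delta R Y"
  unfolding dim_def by (rule Min_le[OF finite_delta_values]) auto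

lemma dim_attained:
  assumes "finite A" "X \<subseteq> A"
  obtains Y where "X \<subseteq> Y" "Y \<subseteq> A" "dim A R X = delta R Y"
proof -
  have "dim A R X \<in> {delta R Y | Y. X \<subseteq> Y \<and> Y \<subseteq> A}"
    unfolding dim_def by (rule Min_in[OF finite_delta_values]) (use assms in auto)
  then show ?thesis using that by auto
qed

lemma dim_mono: "finite A \<Longrightarrow> X \<subseteq> X' \<Longrightarrow> X' \<subseteq> A \<Longrightarrow> dim A R X \<le> dim A R X'"
  by (metis dim_attained dim_le_delta order_trans)

lemma dim_le_card: "finite A \<Longrightarrow> X \<subseteq> A \<Longrightarrow> dim A R X \<le> int (card X)"
  using dim_le_delta[of A X X R] by (simp add: delta_def)

(* The predimension is submodular: R[X] \<union> R[Z] \<subseteq> R[X \<union> Z] and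
   R[X \<inter> Z] = R[X] \<inter> R[Z]. *)
lemma delta_submod:
  assumes "finite X" "finite Z"
  shows "delta R (X \<union> Z) + delta R (X \<inter> Z) \<le> delta R X + delta R Z"
proof -
  have finRsub: "finite (Rsub R W)" if "finite W" for W
    using that by (intro finite_subset[of "Rsub R W" "Pow W"]) (auto simp: Rsub_def)
  have inter: "Rsub R (X \<inter> Z) = Rsub R X \<inter> Rsub R Z" by (auto simp: Rsub_def)
  have "card (Rsub R X \<union> Rsub R Z) \<le> card (Rsub R (X \<union> Z))"
    using assms by (intro card_mono finRsub) (auto simp: Rsub_def)
  moreover have "card (X \<union> Z) + card (X \<inter> Z) = card X + card Z"
    using card_Un_Int assms by metis
  moreover have "card (Rsub R X \<union> Rsub R Z) + card (Rsub R X \<inter> Rsub R Z)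
      = card (Rsub R X) + card (Rsub R Z)"
    using card_Un_Int finRsub assms by metis
  ultimately show ?thesis unfolding delta_def inter by linarith
qed

(* Submodularity passes from \<delta> to d, comparing with the minimisers for X and Z. *)
lemma dim_submod:
  assumes "finite A" "X \<subseteq> A" "Z \<subseteq> A"
  shows "dim A R (X \<union> Z) + dim A R (X \<inter> Z) \<le> dim A R X + dim A R Z"
proof -
  obtain Y1 where Y1: "X \<subseteq> Y1" "Y1 \<subseteq> A" "dim A R X = delta R Y1"
    using dim_attained assms(1,2) by blast
  obtain Y2 where Y2: "Z \<subseteq> Y2" "Y2 \<subseteq> A" "dim A R Z = delta R Y2"
    using dim_attained assms(1,3) by blast
  have "dim A R (X \<union> Z) \<le> delta R (Y1 \<union> Y2)" using Y1 Y2 assms(1) by (intro dim_le_delta) auto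
  moreover have "dim A R (X \<inter> Z) \<le> delta R (Y1 \<inter> Y2)" using Y1 Y2 assms(1) by (intro dim_le_delta) auto
  moreover have "delta R (Y1 \<union> Y2) + delta R (Y1 \<inter> Y2) \<le> delta R Y1 + delta R Y2"
    using Y1 Y2 assms(1) by (intro delta_submod) (auto intro: finite_subset)
  ultimately show ?thesis using Y1 Y2 by linarith
qed

(* In the class C, d(\<emptyset>) = 0: \<delta>(\<emptyset>) = 0 since relations are nonempty,
   and \<delta> \<ge> 0 everywhere. *)
lemma dim_empty:
  assumes "in_C A R"
  shows "dim A R {} = 0"
proof -
  have finA: "finite A" using assms by (simp add: in_C_def)
  obtain W where W: "W \<subseteq> A" "dim A R {} = delta R W" using dim_attained[OF finA empty_subsetI] by metis
  have "Rsub R {} = {}" using assms unfolding in_C_def set_system_def Rsub_def by auto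
  then have "dim A R {} \<le> 0" using dim_le_delta[OF finA, of "{}" "{}" R] by (simp add: delta_def)
  moreover have "delta R W \<ge> 0" using assms W(1) by (simp add: in_C_def)
  ultimately show ?thesis using W by linarith
qed

lemma dim_whole:
  assumes "finite A" "set_system A R"
  shows "dim A R A = int (card A) - int (card R)"
proof -
  have "Rsub R A = R" using assms(2) unfolding set_system_def Rsub_def by auto
  moreover obtain Y where "A \<subseteq> Y" "Y \<subseteq> A" "dim A R A = delta R Y"
    using dim_attained[OF assms(1) order_refl] by blast
  ultimately show ?thesis by (simp add: delta_def)
qed

lemma indep_iff_dim_drops:
  assumes "finite A"
  shows "pg_indep A R Y \<longleftrightarrow> Y \<subseteq> A \<and> (\<forall>y\<in>Y. dim A R (Y - {y}) < dim A R Y)"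
proof -
  have "y \<notin> cl A R (Y - {y}) \<longleftrightarrow> dim A R (Y - {y}) < dim A R Y" if "Y \<subseteq> A" "y \<in> Y" for y
  proof -
    have "y \<in> cl A R (Y - {y}) \<longleftrightarrow> dim A R Y = dim A R (Y - {y})"
      using that by (auto simp: cl_def insert_absorb)
    moreover have "dim A R (Y - {y}) \<le> dim A R Y" using that assms by (intro dim_mono) auto
    ultimately show ?thesis by linarith
  qed
  then show ?thesis unfolding pg_indep_def by blast
qed

(* By induction,
   d(Z) \<ge> |Z| for Z \<subseteq> Y: submodularity on insert y Z and Y - {y} gives
   d(insert y Z) - d(Z) \<ge> d(Y) - d(Y - {y}) \<ge> 1. *)
lemma card_le_dim_if_dim_drops:
  assumes C: "in_C A R" and Y: "Y \<subseteq> A" and drops: "\<forall>y\<in>Y. dim A R (Y - {y}) < dim A R Y"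
  shows "int (card Y) \<le> dim A R Y"
proof -
  have finA: "finite A" using C by (simp add: in_C_def)
  have "int (card Z) \<le> dim A R Z" if "Z \<subseteq> Y" for Z
    using finite_subset[OF that finite_subset[OF Y finA]] that
  proof (induction Z rule: finite_induct)
    case empty
    show ?case using dim_empty[OF C] by simp
  next
    case (insert y Z)
    have "dim A R (insert y Z \<union> (Y - {y})) + dim A R (insert y Z \<inter> (Y - {y}))
        \<le> dim A R (insert y Z) + dim A R (Y - {y})"
      using insert.prems Y by (intro dim_submod[OF finA]) auto
    moreover have "insert y Z \<union> (Y - {y}) = Y" "insert y Z \<inter> (Y - {y}) = Z"
      using insert by auto
    moreover have "dim A R (Y - {y}) < dim A R Y" using drops insert.prems by blast
    ultimately show ?case using insert by simp
  qed
  then show ?thesis by blast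
qed

lemma indep_iff_dim_eq_card:
  assumes C: "in_C A R" and Y: "Y \<subseteq> A"
  shows "pg_indep A R Y \<longleftrightarrow> dim A R Y = int (card Y)"
proof -
  have finA: "finite A" using C by (simp add: in_C_def)
  have "dim A R (Y - {y}) < dim A R Y" if "dim A R Y = int (card Y)" "y \<in> Y" for y
  proof -
    have "dim A R (Y - {y}) \<le> int (card (Y - {y}))" using Y by (intro dim_le_card[OF finA]) auto
    moreover have "card Y = Suc (card (Y - {y}))"
      using that(2) Y finA by (metis card_Suc_Diff1 finite_subset)
    ultimately show ?thesis using that(1) by simp
  qed
  moreover have "dim A R Y = int (card Y)" if "\<forall>y\<in>Y. dim A R (Y - {y}) < dim A R Y"
    using card_le_dim_if_dim_drops[OF C Y that] dim_le_card[OF finA Y, of R] by linarith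
  ultimately show ?thesis using indep_iff_dim_drops[OF finA, of R Y] Y by blast
qed

lemma dim_union_closure:
  assumes finA: "finite A" and Y: "Y \<subseteq> A" and "finite Z" "Z \<subseteq> cl A R Y"
  shows "dim A R (Y \<union> Z) = dim A R Y"
  using assms(3,4)
proof (induction Z rule: finite_induct)
  case empty
  show ?case by simp
next
  case (insert a Z)
  have a: "a \<in> A" "dim A R (Y \<union> {a}) = dim A R Y" using insert.prems by (auto simp: cl_def)
  have ZA: "Z \<subseteq> A" using insert.prems by (auto simp: cl_def)
  have e: "(Y \<union> Z) \<union> (Y \<union> {a}) = Y \<union> insert a Z" by auto
  have "Y \<union> Z \<subseteq> A" "Y \<union> {a} \<subseteq> A" using a ZA Y by auto
  from dim_submod[OF finA this]
  have "dim A R (Y \<union> insert a Z) + dim A R ((Y \<union> Z) \<inter> (Y \<union> {a}))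
      \<le> dim A R (Y \<union> Z) + dim A R (Y \<union> {a})"
    by (simp only: e)
  moreover have "dim A R Y \<le> dim A R ((Y \<union> Z) \<inter> (Y \<union> {a}))"
    using a ZA Y by (intro dim_mono[OF finA]) auto
  moreover have "dim A R Y \<le> dim A R (Y \<union> insert a Z)"
    using a ZA Y by (intro dim_mono[OF finA]) auto
  moreover have "dim A R (Y \<union> Z) = dim A R Y" using insert.IH insert.prems by blast
  ultimately show ?case using a(2) by linarith
qed

lemma spanning_iff_dim_eq:
  assumes finA: "finite A" and Y: "Y \<subseteq> A"
  shows "cl A R Y = A \<longleftrightarrow> dim A R Y = dim A R A"
proof
  assume "cl A R Y = A"
  then have "dim A R (Y \<union> A) = dim A R Y" using dim_union_closure[OF finA Y finA] by simp
  then show "dim A R Y = dim A R A" using Y by (simp add: Un_absorb1)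
next
  assume dimY: "dim A R Y = dim A R A"
  have "dim A R (Y \<union> {a}) = dim A R Y" if "a \<in> A" for a
  proof -
    have "dim A R Y \<le> dim A R (Y \<union> {a})" "dim A R (Y \<union> {a}) \<le> dim A R A"
      using that Y by (intro dim_mono[OF finA]; auto)+
    then show ?thesis using dimY by linarith
  qed
  then show "cl A R Y = A" unfolding cl_def by auto
qed

lemma basis_iff:
  assumes C: "in_C A R" and Y: "Y \<subseteq> A"
  shows "pg_basis A R Y \<longleftrightarrow> int (card Y) \<le> dim A R Y \<and> card R = card (A - Y)"
proof -
  have finA: "finite A" and sys: "set_system A R" using C by (auto simp: in_C_def)
  have "int (card (A - Y)) = int (card A) - int (card Y)"
    using Y finA by (simp add: card_Diff_subset card_mono finite_subset)
  moreover have "card R = card (A - Y) \<longleftrightarrow> int (card R) = int (card (A - Y))" by simp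
  ultimately show ?thesis
    unfolding pg_basis_def indep_iff_dim_eq_card[OF C Y] spanning_iff_dim_eq[OF finA Y]
      dim_whole[OF finA sys]
    using dim_le_card[OF finA Y, of R] by linarith
qed

lemma card_le_dim_iff:
  assumes finA: "finite A" and Y: "Y \<subseteq> A"
  shows "int (card Y) \<le> dim A R Y \<longleftrightarrow> (\<forall>Z. Y \<subseteq> Z \<and> Z \<subseteq> A \<longrightarrow> card (Rsub R Z) \<le> card (Z - Y))"
proof -
  have pointwise: "int (card Y) \<le> delta R Z \<longleftrightarrow> card (Rsub R Z) \<le> card (Z - Y)" if "Y \<subseteq> Z" "Z \<subseteq> A" for Z
  proof -
    have "card (Z - Y) = card Z - card Y" "card Y \<le> card Z"
      using that finA by (auto simp: card_Diff_subset finite_subset card_mono)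
    then show ?thesis unfolding delta_def by linarith
  qed
  show ?thesis
  proof
    assume dimY: "int (card Y) \<le> dim A R Y"
    show "\<forall>Z. Y \<subseteq> Z \<and> Z \<subseteq> A \<longrightarrow> card (Rsub R Z) \<le> card (Z - Y)"
    proof (intro allI impI)
      fix Z assume Z: "Y \<subseteq> Z \<and> Z \<subseteq> A"
      then have "dim A R Y \<le> delta R Z" using dim_le_delta[OF finA] by blast
      then have "int (card Y) \<le> delta R Z" using dimY by linarith
      then show "card (Rsub R Z) \<le> card (Z - Y)" using pointwise Z by blast
    qed
  next
    assume "\<forall>Z. Y \<subseteq> Z \<and> Z \<subseteq> A \<longrightarrow> card (Rsub R Z) \<le> card (Z - Y)"
    moreover obtain Z where "Y \<subseteq> Z" "Z \<subseteq> A" "dim A R Y = delta R Z"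
      using dim_attained[OF finA Y] by metis
    ultimately show "int (card Y) \<le> dim A R Y" using pointwise by auto
  qed
qed

lemma finite_relations: "finite A \<Longrightarrow> set_system A R \<Longrightarrow> finite R"
  unfolding set_system_def by (rule finite_subset[of R "Pow A"]) auto

(* The counting condition of card_le_dim_iff is Hall's condition for the
   family of traces r - Y of the relations outside Y: one passes between a
   subfamily J and the set Z = Y \<union> \<Union>J. *)
lemma hall_condition_iff_card_le_dim:
  assumes finA: "finite A" and sys: "set_system A R" and Y: "Y \<subseteq> A"
  shows "hall_condition R (\<lambda>r. r - Y) \<longleftrightarrow> int (card Y) \<le> dim A R Y"
  unfolding card_le_dim_iff[OF finA Y]
proof (intro iffI allI impI)
  fix Z assume hall: "hall_condition R (\<lambda>r. r - Y)" and Z: "Y \<subseteq> Z \<and> Z \<subseteq> A"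
  have "card (Rsub R Z) \<le> card (\<Union>((\<lambda>r. r - Y) ` Rsub R Z))"
    by (rule hall_conditionD[OF hall]) (auto simp: Rsub_def)
  also have "\<dots> \<le> card (Z - Y)"
    using Z finA by (intro card_mono) (auto simp: Rsub_def intro: finite_subset)
  finally show "card (Rsub R Z) \<le> card (Z - Y)" .
next
  assume tight: "\<forall>Z. Y \<subseteq> Z \<and> Z \<subseteq> A \<longrightarrow> card (Rsub R Z) \<le> card (Z - Y)"
  show "hall_condition R (\<lambda>r. r - Y)"
    unfolding hall_condition_def
  proof (intro allI impI)
    fix J assume J: "J \<subseteq> R"
    define Z where "Z = Y \<union> \<Union>J"
    have Z: "Y \<subseteq> Z" "Z \<subseteq> A" using Y J sys unfolding Z_def set_system_def by auto
    have "card J \<le> card (Rsub R Z)"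
      using J finite_relations[OF finA sys] by (intro card_mono) (auto simp: Rsub_def Z_def)
    also have "\<dots> \<le> card (Z - Y)" using tight Z by blast
    also have "Z - Y = \<Union>((\<lambda>r. r - Y) ` J)" unfolding Z_def by auto
    finally show "card J \<le> card (\<Union>((\<lambda>r. r - Y) ` J))" .
  qed
qed

lemma transversal_onto_complement_iff:
  assumes finA: "finite A" and sys: "set_system A R" and Y: "Y \<subseteq> A"
  shows "(\<exists>t. transversal A R t \<and> A - Y = t ` R)
    \<longleftrightarrow> (\<exists>t. is_sdr R (\<lambda>r. r - Y) t) \<and> card R = card (A - Y)"
proof
  assume "\<exists>t. transversal A R t \<and> A - Y = t ` R"
  then obtain t where t: "transversal A R t" "A - Y = t ` R" by blast
  have "is_sdr R (\<lambda>r. r - Y) t" using t unfolding transversal_def is_sdr_def by blast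
  moreover have "card R = card (A - Y)" using t by (simp add: transversal_def card_image)
  ultimately show "(\<exists>t. is_sdr R (\<lambda>r. r - Y) t) \<and> card R = card (A - Y)" by blast
next
  assume "(\<exists>t. is_sdr R (\<lambda>r. r - Y) t) \<and> card R = card (A - Y)"
  then obtain t where t: "is_sdr R (\<lambda>r. r - Y) t" and card: "card R = card (A - Y)" by blast
  have trans: "transversal A R t" using t sys unfolding is_sdr_def transversal_def set_system_def by blast
  have "t ` R \<subseteq> A - Y" using t sys unfolding is_sdr_def set_system_def by blast
  moreover have "card (t ` R) = card (A - Y)" using t card by (simp add: is_sdr_def card_image)
  ultimately have "t ` R = A - Y" using finA by (intro card_subset_eq) auto
  then show "\<exists>t. transversal A R t \<and> A - Y = t ` R" using trans by blast
qed

theorem theorem2p2: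
  fixes A :: "'a set" and R :: "'a set set" and Y :: "'a set"
  assumes "in_C A R" and "Y \<subseteq> A"
  shows "pg_basis A R Y \<longleftrightarrow> (\<exists>t. transversal A R t \<and> A - Y = t ` R)"
proof -
  have finA: "finite A" and sys: "set_system A R" using assms(1) by (auto simp: in_C_def)
  have fin_pieces: "\<forall>r\<in>R. finite (r - Y)" using sys by (simp add: set_system_def)
  have "pg_basis A R Y \<longleftrightarrow> int (card Y) \<le> dim A R Y \<and> card R = card (A - Y)"
    by (rule basis_iff[OF assms])
  also have "\<dots> \<longleftrightarrow> hall_condition R (\<lambda>r. r - Y) \<and> card R = card (A - Y)"
    using hall_condition_iff_card_le_dim[OF finA sys assms(2)] by blast
  also have "\<dots> \<longleftrightarrow> (\<exists>t. is_sdr R (\<lambda>r. r - Y) t) \<and> card R = card (A - Y)"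
    using hall_iff[OF finite_relations[OF finA sys] fin_pieces] by blast
  also have "\<dots> \<longleftrightarrow> (\<exists>t. transversal A R t \<and> A - Y = t ` R)"
    using transversal_onto_complement_iff[OF finA sys assms(2)] by blast
  finally show ?thesis .
qed

end
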